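(* Let $m \geq 2$ be an integer, let $\alpha \in (0,1)$ be real, and let $\mu$ be a nonzero finite Borel measure on $\mathbb{T}$ such that for $\mu$-a.e. $x\in\mathbb{T}$ the upper $\alpha$-density $\Theta^{\alpha,*}(\mu,x)$ is finite and the lower $\alpha$-density $\Theta_{\alpha,*}(\mu,x)$ is positive. Then $$\mathcal{C}_{loc}(\mu,\alpha) \;\geq\; \sup_{i,j \in \mathbb{N}} \max\left( \frac{m^{\alpha i}}{\lfloor m^{\alpha i}\rfloor},\ \frac{\lceil m^{\alpha j}\rceil}{m^{\alpha j}} \right).$$
   Context: Fix an integer $m\ge 2$ and let $\mathbb{T}=\{0,1,\dots,m-1\}^{\mathbb{N}}$ be the set of infinite sequences $a=(a_1,a_2,\dots)$ with entries in $\{0,\dots,m-1\}$. For distinct $a,b\in\mathbb{T}$ let $n(a,b)$ be the first index at which $a$ and $b$ differ, and set $d(a,b)=m^{-n(a,b)+1}$ (and $d(a,a)=0$); $(\mathbb{T},d)$ is a metric space. For an integer $n\ge 0$ and $x\in\mathbb{T}$, $B_n(x)$ denotes the closed ball $B(x,m^{-n})$, which is the set of sequences agreeing with $x$ in the first $n$ positions; such sets are called ($m$-adic) intervals of level $n$ (so $\mathbb{T}$ is the unique interval of level $0$). For a Borel measure $\mu$ on $\mathbb{T}$ and $\alpha>0$, the upper and lower $\alpha$-densities at $x$ are $\Theta^{\alpha,*}(\mu,x)=\limsup_{n\to\infty} m^{\alpha n}\mu(B_n(x))$ and $\Theta_{\alpha,*}(\mu,x)=\liminf_{n\to\infty} m^{\alpha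 n}\mu(B_n(x))$. When upper densities are finite and lower densities positive $\mu$-a.e., define $\mathcal{C}_{loc}(\mu,\alpha)=\operatorname{ess\,sup}_{x\in\mathbb{T}} \frac{\Theta^{\alpha,*}(\mu,x)}{\Theta_{\alpha,*}(\mu,x)}$, the essential supremum taken with respect to $\mu$. $\lfloor x\rfloor$ and $\lceil x\rceil$ denote floor and ceiling; $\mathbb{N}=\{1,2,\dots\}$. *)

theory Defs
  imports "HOL-Probability.Probability"
begin

text \<open>The sequence space T = {0,..,m-1}^N (positions indexed from 0 here).\<close>
definition seqT :: "nat \<Rightarrow> (nat \<Rightarrow> nat) set" where
  "seqT m = {x. \<forall>k. x k < m}"

text \<open>m-adic interval of level n containing x: sequences agreeing with x in the first n positions
 (= closed ball B(x, m^-n) for the metric d).\<close>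
definition adic_ball :: "nat \<Rightarrow> nat \<Rightarrow> (nat \<Rightarrow> nat) \<Rightarrow> (nat \<Rightarrow> nat) set" where
  "adic_ball m n x = {y \<in> seqT m. \<forall>k<n. y k = x k}"

text \<open>Borel sigma-algebra of (T,d): generated by the (countably many) closed balls, i.e. the m-adic intervals.\<close>
definition borelT :: "nat \<Rightarrow> (nat \<Rightarrow> nat) set set" where
  "borelT m = sigma_sets (seqT m) {adic_ball m n x | n x. x \<in> seqT m}"

definition upper_density :: "nat \<Rightarrow> (nat \<Rightarrow> nat) measure \<Rightarrow> real \<Rightarrow> (nat \<Rightarrow> nat) \<Rightarrow> ereal" where
  "upper_density m \<mu> \<alpha> x =
     limsup (\<lambda>n. ereal (real m powr (\<alpha> * real n) * measure \<mu> (adic_ball m n x)))"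

definition lower_density :: "nat \<Rightarrow> (nat \<Rightarrow> nat) measure \<Rightarrow> real \<Rightarrow> (nat \<Rightarrow> nat) \<Rightarrow> ereal" where
  "lower_density m \<mu> \<alpha> x =
     liminf (\<lambda>n. ereal (real m powr (\<alpha> * real n) * measure \<mu> (adic_ball m n x)))"

definition C_loc :: "nat \<Rightarrow> (nat \<Rightarrow> nat) measure \<Rightarrow> real \<Rightarrow> ereal" where
  "C_loc m \<mu> \<alpha> = esssup \<mu> (\<lambda>x. upper_density m \<mu> \<alpha> x / lower_density m \<mu> \<alpha> x)"

end

theory Submission
  imports Defs
begin

text \<open>Fix a real \<open>c \<ge> C_loc\<close>, so that \<open>\<Theta>\<^sup>* \<le> c \<Theta>\<^sub>*\<close> almost everywhere, and put \<open>r = m\<^sup>\<alpha>\<^sup>i\<close>.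
  For small \<open>\<epsilon>\<close> there are a set \<open>E\<close> of positive measure and a scale \<open>q\<close> such that, from some
  level on, all scaled masses \<open>m\<^sup>\<alpha>\<^sup>n \<mu>(B\<^sub>n(y))\<close> of points \<open>y \<in> E\<close> lie between \<open>a q\<close> and \<open>b q\<close>
  (up to factors \<open>1 \<plusminus> \<epsilon>\<close>), while those of each point of \<open>E\<close> come back close to \<open>q\<close>
  infinitely often. At a Lebesgue density point \<open>x\<close> of \<open>E\<close> and such a level \<open>n\<close>, the \<open>k\<close>
  subintervals of level \<open>n + i\<close> meeting \<open>E\<close> almost fill \<open>B\<^sub>n(x)\<close>; comparing masses gives
  \<open>a k \<le> r \<le> b k\<close> up to factors \<open>1 \<plusminus> \<epsilon>\<close>, and since \<open>k\<close> is an integer this survives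
  \<open>\<epsilon> \<rightarrow> 0\<close>. Scaling by the lower density (\<open>a = 1\<close>, \<open>b = c\<close>) gives \<open>k \<le> r \<le> c k\<close>, hence
  \<open>r / \<lfloor>r\<rfloor> \<le> c\<close>; scaling by the upper density (\<open>a = 1/c\<close>, \<open>b = 1\<close>) gives \<open>r \<le> k \<le> c r\<close>,
  hence \<open>\<lceil>r\<rceil> / r \<le> c\<close>.\<close>

section \<open>Limits and integer parts\<close>

lemma frequently_near_liminf:
  fixes f :: "nat \<Rightarrow> real"
  assumes "liminf (\<lambda>n. ereal (f n)) = ereal l" and "0 < e"
  shows "\<exists>\<^sub>F n in sequentially. l - e < f n \<and> f n < l + e"
proof -
  have "\<forall>\<^sub>F n in sequentially. ereal (l - e) < ereal (f n)"
    using assms by (intro less_LiminfD) simp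
  moreover have "\<exists>\<^sub>F n in sequentially. f n < l + e"
  proof (rule ccontr)
    assume "\<not> ?thesis"
    then have "\<forall>\<^sub>F n in sequentially. ereal (l + e) \<le> ereal (f n)"
      by (auto simp: not_frequently elim: eventually_mono)
    then have "ereal (l + e) \<le> ereal l" unfolding assms(1)[symmetric] by (rule Liminf_bounded)
    then show False using assms(2) by simp
  qed
  ultimately show ?thesis
    by (auto intro: frequently_eventually_frequently[THEN frequently_elim1])
qed

lemma frequently_near_limsup:
  fixes f :: "nat \<Rightarrow> real"
  assumes "limsup (\<lambda>n. ereal (f n)) = ereal u" and "0 < e"
  shows "\<exists>\<^sub>F n in sequentially. u - e < f n \<and> f n < u + e"
proof -
  have "\<forall>\<^sub>F n in sequentially. ereal (f n) < ereal (u + e)"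
    using assms by (intro Limsup_lessD) simp
  moreover have "\<exists>\<^sub>F n in sequentially. u - e < f n"
  proof (rule ccontr)
    assume "\<not> ?thesis"
    then have "\<forall>\<^sub>F n in sequentially. ereal (f n) \<le> ereal (u - e)"
      by (auto simp: not_frequently elim: eventually_mono)
    then have "ereal u \<le> ereal (u - e)" unfolding assms(1)[symmetric] by (rule Limsup_bounded)
    then show False using assms(2) by simp
  qed
  ultimately show ?thesis
    by (auto intro: frequently_eventually_frequently[THEN frequently_elim1])
qed

lemma tendsto_le_frequently:
  fixes f g :: "'a \<Rightarrow> real"
  assumes "(f \<longlongrightarrow> x) F" "(g \<longlongrightarrow> y) F" "\<exists>\<^sub>F t in F. f t \<le> g t"
  shows "x \<le> y"
proof (rule ccontr)
  assume "\<not> x \<le> y"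
  then have "\<forall>\<^sub>F t in F. 0 < f t - g t"
    using assms(1,2) by (intro order_tendstoD(1)[OF tendsto_diff]) auto
  then have "\<forall>\<^sub>F t in F. \<not> f t \<le> g t" by (rule eventually_mono) simp
  then show False using assms(3) by (simp add: frequently_def)
qed

lemma exists_pos_emeasure_of_AE_cover:
  assumes "countable I" "\<And>i. i \<in> I \<Longrightarrow> A i \<in> sets M"
    and "AE x in M. \<exists>i\<in>I. x \<in> A i" and "emeasure M (space M) \<noteq> 0"
  shows "\<exists>i\<in>I. 0 < emeasure M (A i)"
proof (rule ccontr)
  assume "\<not> ?thesis"
  then have "AE x in M. \<forall>i\<in>I. x \<notin> A i"
    using assms(1,2) by (subst AE_ball_countable) (auto intro: AE_not_in simp: null_sets_def)
  with assms(3) have "AE x in M. False" by eventually_elim blast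
  then show False using assms(4) by (simp add: ae_filter_eq_bot_iff)
qed

text \<open>Pigeonhole: the integer witnesses for \<open>\<epsilon> < 1/3\<close> range over a finite set.\<close>
lemma exists_nat_frequently_approx:
  fixes a b r :: real
  assumes "0 < a" "0 < r"
    and approx: "\<And>\<epsilon>. 0 < \<epsilon> \<Longrightarrow> \<epsilon> < 1 \<Longrightarrow>
      \<exists>k::nat. a * k * (1 - \<epsilon>) \<le> r * (1 + \<epsilon>)^2 \<and> r * (1 - \<epsilon>)^2 \<le> b * k * (1 + \<epsilon>)^2"
  shows "\<exists>k::nat. \<exists>\<^sub>F \<epsilon> in at_right 0.
    a * k * (1 - \<epsilon>) \<le> r * (1 + \<epsilon>)^2 \<and> r * (1 - \<epsilon>)^2 \<le> b * k * (1 + \<epsilon>)^2"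
proof -
  define P where "P \<epsilon> k \<longleftrightarrow> a * k * (1 - \<epsilon>) \<le> r * (1 + \<epsilon>)^2 \<and> r * (1 - \<epsilon>)^2 \<le> b * k * (1 + \<epsilon>)^2"
    for \<epsilon> :: real and k :: nat
  define K where "K = {k::nat. a * k \<le> 3 * r}"
  have "K \<subseteq> {..nat \<lceil>3 * r / a\<rceil>}"
  proof
    fix k assume "k \<in> K"
    then have "real k \<le> 3 * r / a" using assms(1) by (simp add: K_def field_simps)
    then show "k \<in> {..nat \<lceil>3 * r / a\<rceil>}" by (simp add: le_nat_iff le_ceiling_iff)
  qed
  then have "finite K" by (rule finite_subset) simp
  have K_bound: "k \<in> K" if "\<epsilon> \<in> {0<..<1/3}" "P \<epsilon> k" for \<epsilon> k
  proof -
    have "a * k * (2/3) \<le> a * k * (1 - \<epsilon>)"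
      using that assms(1) by (intro mult_left_mono) auto
    also have "\<dots> \<le> r * (1 + \<epsilon>)^2" using \<open>P \<epsilon> k\<close> unfolding P_def by blast
    also have "\<dots> \<le> r * (4/3)^2"
      using that assms(2) by (intro mult_left_mono power_mono) auto
    finally show "k \<in> K" using assms(2) by (simp add: K_def power2_eq_square)
  qed
  have "\<forall>\<^sub>F \<epsilon> in at_right (0::real). \<epsilon> \<in> {0<..<1/3}"
    by (rule eventually_at_right_real) simp
  then have "\<forall>\<^sub>F \<epsilon> in at_right 0. \<exists>k\<in>K. P \<epsilon> k"
  proof (rule eventually_mono)
    fix \<epsilon> :: real assume \<epsilon>: "\<epsilon> \<in> {0<..<1/3}"
    then obtain k where "P \<epsilon> k" using approx unfolding P_def by fastforce
    then show "\<exists>k\<in>K. P \<epsilon> k" using K_bound[OF \<epsilon>] by blast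
  qed
  then show ?thesis
    using frequently_bex_finite[OF \<open>finite K\<close>] eventually_frequently[of "at_right (0::real)"]
    unfolding P_def by force
qed

lemma exists_nat_between_of_approx:
  fixes a b r :: real
  assumes "0 < a" "0 < r"
    and "\<And>\<epsilon>. 0 < \<epsilon> \<Longrightarrow> \<epsilon> < 1 \<Longrightarrow>
      \<exists>k::nat. a * k * (1 - \<epsilon>) \<le> r * (1 + \<epsilon>)^2 \<and> r * (1 - \<epsilon>)^2 \<le> b * k * (1 + \<epsilon>)^2"
  shows "\<exists>k::nat. a * k \<le> r \<and> r \<le> b * k"
proof -
  obtain k :: nat where k: "\<exists>\<^sub>F \<epsilon> in at_right 0.
      a * k * (1 - \<epsilon>) \<le> r * (1 + \<epsilon>)^2 \<and> r * (1 - \<epsilon>)^2 \<le> b * k * (1 + \<epsilon>)^2"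
    using exists_nat_frequently_approx[OF assms] by blast
  note lim = tendsto_mult tendsto_diff tendsto_add tendsto_power tendsto_const tendsto_ident_at
  have "a * k * (1 - 0) \<le> r * (1 + 0)^2"
  proof (rule tendsto_le_frequently)
    show "((\<lambda>\<epsilon>. a * k * (1 - \<epsilon>)) \<longlongrightarrow> a * k * (1 - 0)) (at_right 0)"
      "((\<lambda>\<epsilon>. r * (1 + \<epsilon>)^2) \<longlongrightarrow> r * (1 + 0)^2) (at_right 0)"
      by (intro lim)+
    show "\<exists>\<^sub>F \<epsilon> in at_right 0. a * k * (1 - \<epsilon>) \<le> r * (1 + \<epsilon>)^2"
      using k by (rule frequently_elim1) simp
  qed
  moreover have "r * (1 - 0)^2 \<le> b * k * (1 + 0)^2"
  proof (rule tendsto_le_frequently)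
    show "((\<lambda>\<epsilon>. r * (1 - \<epsilon>)^2) \<longlongrightarrow> r * (1 - 0)^2) (at_right 0)"
      "((\<lambda>\<epsilon>. b * k * (1 + \<epsilon>)^2) \<longlongrightarrow> b * k * (1 + 0)^2) (at_right 0)"
      by (intro lim)+
    show "\<exists>\<^sub>F \<epsilon> in at_right 0. r * (1 - \<epsilon>)^2 \<le> b * k * (1 + \<epsilon>)^2"
      using k by (rule frequently_elim1) simp
  qed
  ultimately show ?thesis by auto
qed

lemma divide_floor_le:
  fixes r c :: real
  assumes "1 \<le> r" "real k \<le> r" "r \<le> c * k"
  shows "r / \<lfloor>r\<rfloor> \<le> c"
proof -
  have "int k \<le> \<lfloor>r\<rfloor>" using assms(2) by (simp add: le_floor_iff)
  then have k_le: "real k \<le> \<lfloor>r\<rfloor>" by (metis of_int_le_iff of_int_of_nat_eq)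
  have "0 < c * k" using assms(1,3) by linarith
  then have "0 \<le> c" by (simp add: zero_less_mult_iff)
  then have "r \<le> c * \<lfloor>r\<rfloor>"
    using assms(3) k_le by (meson mult_left_mono order_trans)
  then show ?thesis using assms(1) by (simp add: divide_le_eq)
qed

lemma ceiling_divide_le:
  fixes r c :: real
  assumes "0 < r" "r \<le> real k" "real k \<le> c * r"
  shows "\<lceil>r\<rceil> / r \<le> c"
proof -
  have "\<lceil>r\<rceil> \<le> k" using assms(2) by (simp add: ceiling_le_iff)
  then show ?thesis using assms by (simp add: divide_le_eq)
qed

section \<open>Cylinder sets of the \<open>m\<close>-adic tree\<close>

definition adic_cylinder :: "nat \<Rightarrow> nat \<Rightarrow> (nat \<Rightarrow> nat) set \<Rightarrow> bool" where
  "adic_cylinder m n A \<longleftrightarrow> A \<subseteq> seqT m \<and> (\<forall>x\<in>A. adic_ball m n x \<subseteq> A)"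

lemma adic_ball_subset_seqT: "adic_ball m n x \<subseteq> seqT m"
  by (auto simp: adic_ball_def)

lemma adic_ball_self: "x \<in> seqT m \<Longrightarrow> x \<in> adic_ball m n x"
  by (simp add: adic_ball_def)

lemma adic_ball_eq: "y \<in> adic_ball m n x \<Longrightarrow> adic_ball m n y = adic_ball m n x"
  by (auto simp: adic_ball_def)

lemma adic_ball_antimono: "n \<le> n' \<Longrightarrow> adic_ball m n' x \<subseteq> adic_ball m n x"
  by (auto simp: adic_ball_def)

lemma adic_ball_disjoint_or_eq:
  "adic_ball m n x = adic_ball m n y \<or> adic_ball m n x \<inter> adic_ball m n y = {}"
  using adic_ball_eq by blast

lemma finite_adic_balls: "finite ((\<lambda>x. adic_ball m n x) ` seqT m)"
proof -
  have "(\<lambda>x. adic_ball m n x) ` seqT m \<subseteq>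
      (\<lambda>p. {y \<in> seqT m. \<forall>k<n. y k = p k}) ` PiE {..<n} (\<lambda>_. {..<m})"
  proof
    fix B assume "B \<in> (\<lambda>x. adic_ball m n x) ` seqT m"
    then obtain x where x: "x \<in> seqT m" "B = adic_ball m n x" by blast
    then have "restrict x {..<n} \<in> PiE {..<n} (\<lambda>_. {..<m})"
      by (auto simp: seqT_def)
    moreover have "B = {y \<in> seqT m. \<forall>k<n. y k = restrict x {..<n} k}"
      using x by (auto simp: adic_ball_def)
    ultimately show "B \<in> (\<lambda>p. {y \<in> seqT m. \<forall>k<n. y k = p k}) ` PiE {..<n} (\<lambda>_. {..<m})"
      by blast
  qed
  then show ?thesis by (rule finite_subset) (simp add: finite_PiE)
qed

lemma adic_cylinder_empty: "adic_cylinder m n {}"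
  by (simp add: adic_cylinder_def)

lemma adic_cylinder_ball: "x \<in> seqT m \<Longrightarrow> adic_cylinder m n (adic_ball m n x)"
  unfolding adic_cylinder_def using adic_ball_eq adic_ball_subset_seqT by blast

lemma adic_cylinder_mono: "adic_cylinder m n A \<Longrightarrow> n \<le> n' \<Longrightarrow> adic_cylinder m n' A"
  unfolding adic_cylinder_def using adic_ball_antimono by blast

lemma adic_cylinder_Diff: "adic_cylinder m n A \<Longrightarrow> adic_cylinder m n (seqT m - A)"
  unfolding adic_cylinder_def using adic_ball_eq adic_ball_subset_seqT adic_ball_self by blast

lemma adic_cylinder_UN:
  "(\<And>i. i \<in> I \<Longrightarrow> adic_cylinder m n (A i)) \<Longrightarrow> adic_cylinder m n (\<Union>i\<in>I. A i)"
  unfolding adic_cylinder_def by blast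

lemma adic_cylinder_eq_Union:
  "adic_cylinder m n A \<Longrightarrow> A = \<Union>((\<lambda>x. adic_ball m n x) ` A)"
  unfolding adic_cylinder_def using adic_ball_self by blast

lemma finite_adic_cylinder_balls:
  "adic_cylinder m n A \<Longrightarrow> finite ((\<lambda>x. adic_ball m n x) ` A)"
  unfolding adic_cylinder_def using finite_adic_balls by (meson finite_subset image_mono)

lemma adic_first_hit_decomposition:
  fixes m :: nat and P :: "nat \<Rightarrow> (nat \<Rightarrow> nat) set \<Rightarrow> bool"
  defines "S n \<equiv> {x \<in> seqT m. P n (adic_ball m n x) \<and> (\<forall>k<n. \<not> P k (adic_ball m k x))}"
  shows "adic_cylinder m n (S n)" and "disjoint_family S"
    and "(\<Union>n. S n) = {x \<in> seqT m. \<exists>n. P n (adic_ball m n x)}"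
proof -
  have "adic_ball m k y = adic_ball m k x" if "y \<in> adic_ball m n x" "k \<le> n" for x y k
    using that adic_ball_eq adic_ball_antimono by blast
  then show "adic_cylinder m n (S n)"
    unfolding adic_cylinder_def S_def using adic_ball_subset_seqT by fastforce
  show "disjoint_family S"
    unfolding disjoint_family_on_def S_def by (auto, metis linorder_neqE_nat)
  show "(\<Union>n. S n) = {x \<in> seqT m. \<exists>n. P n (adic_ball m n x)}"
  proof
    show "{x \<in> seqT m. \<exists>n. P n (adic_ball m n x)} \<subseteq> (\<Union>n. S n)"
    proof
      fix x assume "x \<in> {x \<in> seqT m. \<exists>n. P n (adic_ball m n x)}"
      then have "x \<in> S (LEAST n. P n (adic_ball m n x))"
        unfolding S_def by (auto intro: LeastI_ex dest: not_less_Least)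
      then show "x \<in> (\<Union>n. S n)" by blast
    qed
  qed (auto simp: S_def)
qed

locale adic_measure = finite_measure M for M :: "(nat \<Rightarrow> nat) measure" +
  fixes m :: nat
  assumes space_eq: "space M = seqT m" and sets_eq: "sets M = borelT m"
begin

lemma adic_ball_in_sets: "adic_ball m n x \<in> sets M"
proof (cases "adic_ball m n x = {}")
  case False
  then obtain y where y: "y \<in> adic_ball m n x" by blast
  then have "adic_ball m n y \<in> sets M"
    using adic_ball_subset_seqT unfolding sets_eq borelT_def by (intro sigma_sets.Basic) blast
  then show ?thesis using adic_ball_eq[OF y] by simp
qed simp

lemma adic_cylinder_in_sets: "adic_cylinder m n A \<Longrightarrow> A \<in> sets M"
  by (subst adic_cylinder_eq_Union)
     (auto intro!: sets.finite_Union finite_adic_cylinder_balls adic_ball_in_sets)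

lemma measure_Int_Union_adic_balls:
  assumes "A \<subseteq> seqT m" "Z \<in> sets M"
  shows "measure M (\<Union>((\<lambda>x. adic_ball m n x) ` A) \<inter> Z)
    = (\<Sum>B\<in>(\<lambda>x. adic_ball m n x) ` A. measure M (B \<inter> Z))"
  unfolding Int_Union2
proof (rule finite_measure_finite_Union)
  show "finite ((\<lambda>x. adic_ball m n x) ` A)"
    using assms(1) finite_adic_balls by (meson finite_subset image_mono)
  show "disjoint_family_on (\<lambda>B. B \<inter> Z) ((\<lambda>x. adic_ball m n x) ` A)"
    unfolding disjoint_family_on_def using adic_ball_disjoint_or_eq by blast
qed (use assms adic_ball_in_sets in auto)

lemma measure_Union_adic_balls:
  assumes "A \<subseteq> seqT m"
  shows "measure M (\<Union>((\<lambda>x. adic_ball m n x) ` A))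
    = (\<Sum>B\<in>(\<lambda>x. adic_ball m n x) ` A. measure M B)"
proof -
  have sub: "B \<inter> space M = B" if "B \<in> (\<lambda>x. adic_ball m n x) ` A" for B
    using that adic_ball_subset_seqT space_eq by blast
  then have "\<Union>((\<lambda>x. adic_ball m n x) ` A) \<inter> space M = \<Union>((\<lambda>x. adic_ball m n x) ` A)"
    by blast
  then show ?thesis
    using measure_Int_Union_adic_balls[OF assms sets.top, of n] by (simp add: sub cong: sum.cong)
qed

lemma measure_Int_adic_cylinder_ge:
  assumes A: "adic_cylinder m n A" and Z: "Z \<in> sets M"
    and balls: "\<And>x. x \<in> A \<Longrightarrow> c * measure M (adic_ball m n x) \<le> measure M (adic_ball m n x \<inter> Z)"
  shows "c * measure M A \<le> measure M (A \<inter> Z)"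
proof -
  let ?Bs = "(\<lambda>x. adic_ball m n x) ` A"
  have A_sub: "A \<subseteq> seqT m" using A adic_cylinder_def by blast
  have "c * measure M A = (\<Sum>B\<in>?Bs. c * measure M B)"
    using measure_Union_adic_balls[OF A_sub, of n] adic_cylinder_eq_Union[OF A]
    by (simp add: sum_distrib_left)
  also have "\<dots> \<le> (\<Sum>B\<in>?Bs. measure M (B \<inter> Z))"
    using balls by (intro sum_mono) auto
  also have "\<dots> = measure M (A \<inter> Z)"
    using measure_Int_Union_adic_balls[OF A_sub Z, of n] adic_cylinder_eq_Union[OF A] by simp
  finally show ?thesis .
qed

lemma measurable_adic_step:
  assumes "space N = UNIV" and const: "\<And>x y. y \<in> adic_ball m n x \<Longrightarrow> g y = g x"
  shows "g \<in> measurable M N"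
proof (rule measurableI)
  fix A
  have "adic_cylinder m n (g -` A \<inter> seqT m)"
    using const adic_ball_subset_seqT unfolding adic_cylinder_def by blast
  then show "g -` A \<inter> space M \<in> sets M" using adic_cylinder_in_sets space_eq by simp
qed (use assms(1) in simp)

section \<open>Lebesgue density for \<open>m\<close>-adic intervals\<close>

lemma approx_by_adic_cylinder_UN:
  fixes a :: "nat \<Rightarrow> (nat \<Rightarrow> nat) set"
  assumes a_sets: "\<And>i. a i \<in> sets M" and "0 < \<delta>"
    and approx: "\<And>i \<delta>. 0 < \<delta> \<Longrightarrow> \<exists>n A. adic_cylinder m n A \<and> measure M (sym_diff (a i) A) < \<delta>"
  shows "\<exists>n A. adic_cylinder m n A \<and> measure M (sym_diff (\<Union>i. a i) A) < \<delta>"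
proof -
  have "(\<lambda>K. measure M (\<Union>i<K. a i)) \<longlonglongrightarrow> measure M (\<Union>K. \<Union>i<K. a i)"
    using a_sets by (intro finite_Lim_measure_incseq)
      (auto simp: incseq_def, meson less_le_trans lessThan_iff)
  moreover have "(\<Union>K. \<Union>i<K. a i) = (\<Union>i. a i)" by blast
  ultimately have "\<forall>\<^sub>F K in sequentially. measure M (\<Union>i. a i) - \<delta>/2 < measure M (\<Union>i<K. a i)"
    using \<open>0 < \<delta>\<close> by (auto intro: order_tendstoD)
  then obtain K where K: "measure M (\<Union>i. a i) - \<delta>/2 < measure M (\<Union>i<K. a i)"
    by (auto simp: eventually_sequentially)
  have "\<forall>i. \<exists>n A. adic_cylinder m n A \<and> measure M (sym_diff (a i) A) < \<delta> / (2 * (K + 1))"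
    using approx \<open>0 < \<delta>\<close> by simp
  then obtain n A where nA: "\<And>i. adic_cylinder m (n i) (A i)"
    "\<And>i. measure M (sym_diff (a i) (A i)) < \<delta> / (2 * (K + 1))"
    by metis
  have A_sets: "A i \<in> sets M" for i using nA(1) adic_cylinder_in_sets by blast
  have cyl: "adic_cylinder m (\<Sum>i<K. n i) (\<Union>i<K. A i)"
    using nA(1) by (intro adic_cylinder_UN adic_cylinder_mono[OF nA(1)]) (auto intro: member_le_sum)
  have "sym_diff (\<Union>i. a i) (\<Union>i<K. A i) \<subseteq> ((\<Union>i. a i) - (\<Union>i<K. a i)) \<union> (\<Union>i<K. sym_diff (a i) (A i))"
    by blast
  then have "measure M (sym_diff (\<Union>i. a i) (\<Union>i<K. A i))
      \<le> measure M (((\<Union>i. a i) - (\<Union>i<K. a i)) \<union> (\<Union>i<K. sym_diff (a i) (A i)))"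
    using a_sets A_sets by (intro finite_measure_mono) auto
  also have "\<dots> \<le> measure M ((\<Union>i. a i) - (\<Union>i<K. a i)) + (\<Sum>i<K. measure M (sym_diff (a i) (A i)))"
    using a_sets A_sets by (intro order.trans[OF measure_Un_le] add_left_mono measure_UNION_le) auto
  also have "\<dots> < \<delta>/2 + K * (\<delta> / (2 * (K + 1)))"
  proof (rule add_less_le_mono)
    show "measure M ((\<Union>i. a i) - (\<Union>i<K. a i)) < \<delta>/2"
      using K a_sets by (subst finite_measure_Diff) auto
    show "(\<Sum>i<K. measure M (sym_diff (a i) (A i))) \<le> K * (\<delta> / (2 * (K + 1)))"
      using sum_bounded_above[of "{..<K}", OF less_imp_le[OF nA(2)]] by simp
  qed
  also have "\<dots> < \<delta>"
    using \<open>0 < \<delta>\<close> by (simp add: field_simps)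
  finally show ?thesis using cyl by blast
qed

lemma approx_by_adic_cylinder:
  assumes "E \<in> sets M" "0 < \<delta>"
  shows "\<exists>n A. adic_cylinder m n A \<and> measure M (sym_diff E A) < \<delta>"
proof -
  have "E \<in> sigma_sets (seqT m) {adic_ball m n x | n x. x \<in> seqT m}"
    using assms(1) sets_eq borelT_def by simp
  then show ?thesis using assms(2)
  proof (induct arbitrary: \<delta> rule: sigma_sets.induct)
    case (Basic a)
    then obtain n x where "a = adic_ball m n x" "x \<in> seqT m" by blast
    then show ?case using Basic(2) adic_cylinder_ball by (intro exI[of _ n] exI[of _ a]) auto
  next
    case Empty
    then show ?case using adic_cylinder_empty by (intro exI[of _ 0] exI[of _ "{}"]) auto
  next
    case (Compl a)
    then obtain n A where A: "adic_cylinder m n A" "measure M (sym_diff a A) < \<delta>"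
      by blast
    have "a \<in> sets M" using Compl(1) sets_eq borelT_def by simp
    then have "a \<subseteq> seqT m" "A \<subseteq> seqT m"
      using A(1) sets.sets_into_space space_eq adic_cylinder_def by auto
    then have "sym_diff (seqT m - a) (seqT m - A) = sym_diff a A"
      by blast
    then show ?case
      using A adic_cylinder_Diff[OF A(1)] by (intro exI[of _ n] exI[of _ "seqT m - A"]) simp
  next
    case (Union a)
    then show ?case
      using sets_eq borelT_def by (intro approx_by_adic_cylinder_UN) auto
  qed
qed

lemma adic_maximal_inequality:
  fixes K :: nat
  assumes F: "F \<in> sets M" and \<eta>: "0 < \<eta>"
  defines "G \<equiv> {x \<in> seqT m. \<exists>n\<ge>K.
    \<eta> * measure M (adic_ball m n x) < measure M (adic_ball m n x \<inter> F)}"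
  shows "G \<in> sets M" and "\<eta> * measure M G \<le> measure M F"
proof -
  define P where "P n B \<longleftrightarrow> K \<le> n \<and> \<eta> * measure M B < measure M (B \<inter> F)" for n B
  define S where "S n = {x \<in> seqT m. P n (adic_ball m n x) \<and> (\<forall>k<n. \<not> P k (adic_ball m k x))}" for n
  note S = adic_first_hit_decomposition[where m = m and P = P, folded S_def]
  have G_eq: "G = (\<Union>n. S n)" unfolding S(3) G_def P_def by auto
  have S_sets: "S n \<in> sets M" for n using S(1) adic_cylinder_in_sets by blast
  then show "G \<in> sets M" unfolding G_eq by auto
  have "\<eta> * measure M (S n) \<le> measure M (S n \<inter> F)" for n
    using S(1) F by (rule measure_Int_adic_cylinder_ge) (auto simp: S_def P_def)
  moreover have "(\<lambda>n. \<eta> * measure M (S n)) sums (\<eta> * measure M G)"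
    unfolding G_eq using S_sets S(2) by (intro sums_mult finite_measure_UNION) auto
  moreover have "(\<lambda>n. measure M (S n \<inter> F)) sums measure M (G \<inter> F)"
  proof -
    have "G \<inter> F = (\<Union>n. S n \<inter> F)" unfolding G_eq by blast
    moreover have "disjoint_family (\<lambda>n. S n \<inter> F)"
      using S(2) unfolding disjoint_family_on_def by blast
    ultimately show ?thesis using S_sets F by (simp only:) (intro finite_measure_UNION, auto)
  qed
  ultimately have "\<eta> * measure M G \<le> measure M (G \<inter> F)"
    by (rule sums_le)
  also have "\<dots> \<le> measure M F"
    using F by (intro finite_measure_mono) auto
  finally show "\<eta> * measure M G \<le> measure M F" .
qed

lemma exists_adic_density_point:
  assumes E: "E \<in> sets M" "0 < measure M E" and \<eta>: "0 < \<eta>"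
  shows "\<exists>x\<in>E. \<forall>\<^sub>F n in sequentially.
    measure M (adic_ball m n x - E) \<le> \<eta> * measure M (adic_ball m n x)"
proof (rule ccontr)
  assume "\<not> ?thesis"
  then have frequently_bad: "\<exists>\<^sub>F n in sequentially.
      \<eta> * measure M (adic_ball m n x) < measure M (adic_ball m n x - E)" if "x \<in> E" for x
    using that by (auto simp: not_eventually not_le)
  define \<delta> where "\<delta> = \<eta> * measure M E / (1 + \<eta>)"
  obtain K A where A: "adic_cylinder m K A" and A_approx: "measure M (sym_diff E A) < \<delta>"
    using approx_by_adic_cylinder[OF E(1), of \<delta>] E(2) \<eta> unfolding \<delta>_def by auto
  have A_sets: "A \<in> sets M" using A adic_cylinder_in_sets by blast
  define G where "G = {x \<in> seqT m. \<exists>n\<ge>K.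
      \<eta> * measure M (adic_ball m n x) < measure M (adic_ball m n x \<inter> (A - E))}"
  have G: "G \<in> sets M" "\<eta> * measure M G \<le> measure M (A - E)"
    unfolding G_def using A_sets E(1) \<eta> by (intro adic_maximal_inequality; blast)+
  have "E \<inter> A \<subseteq> G"
  proof
    fix x assume x: "x \<in> E \<inter> A"
    obtain n where n: "K \<le> n" "\<eta> * measure M (adic_ball m n x) < measure M (adic_ball m n x - E)"
      using frequently_bad[of x] x unfolding frequently_sequentially by blast
    have "adic_ball m n x \<subseteq> A"
      using A x n(1) adic_ball_antimono unfolding adic_cylinder_def by blast
    then have "adic_ball m n x - E = adic_ball m n x \<inter> (A - E)" by blast
    then show "x \<in> G" using x n A unfolding G_def adic_cylinder_def by auto
  qed
  then have "measure M E \<le> measure M ((E - A) \<union> G)"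
    using E(1) A_sets G(1) by (intro finite_measure_mono) auto
  also have "\<dots> \<le> measure M (E - A) + measure M (A - E) / \<eta>"
    using E(1) A_sets G \<eta> by (intro order.trans[OF measure_Un_le] add_left_mono)
      (auto simp: pos_le_divide_eq mult.commute)
  also have "\<dots> \<le> measure M (sym_diff E A) + measure M (sym_diff E A) / \<eta>"
    using E(1) A_sets \<eta> by (intro add_mono divide_right_mono finite_measure_mono) auto
  also have "\<dots> = (1 + 1 / \<eta>) * measure M (sym_diff E A)"
    by (simp add: distrib_right)
  also have "\<dots> < (1 + 1 / \<eta>) * \<delta>"
    using A_approx \<eta> by (intro mult_strict_left_mono) (auto intro: add_pos_pos)
  also have "\<dots> = measure M E"
    using \<eta> unfolding \<delta>_def by (simp add: divide_simps)
  finally show False by simp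
qed

section \<open>Counting subintervals\<close>

definition density_ratio :: "real \<Rightarrow> nat \<Rightarrow> (nat \<Rightarrow> nat) \<Rightarrow> real" where
  "density_ratio \<alpha> n x = real m powr (\<alpha> * real n) * measure M (adic_ball m n x)"

lemma upper_density_eq: "upper_density m M \<alpha> x = limsup (\<lambda>n. ereal (density_ratio \<alpha> n x))"
  by (simp add: upper_density_def density_ratio_def)

lemma lower_density_eq: "lower_density m M \<alpha> x = liminf (\<lambda>n. ereal (density_ratio \<alpha> n x))"
  by (simp add: lower_density_def density_ratio_def)

lemma lower_density_le_upper_density: "lower_density m M \<alpha> x \<le> upper_density m M \<alpha> x"
  unfolding upper_density_eq lower_density_eq by (rule Liminf_le_Limsup) simp

lemma measurable_density_ratio [measurable]: "density_ratio \<alpha> n \<in> borel_measurable M"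
  by (rule measurable_adic_step[of _ n]) (auto simp: density_ratio_def adic_ball_eq)

lemma measurable_upper_density [measurable]: "upper_density m M \<alpha> \<in> borel_measurable M"
  unfolding upper_density_eq by measurable

lemma measurable_lower_density [measurable]: "lower_density m M \<alpha> \<in> borel_measurable M"
  unfolding lower_density_eq by measurable

lemma card_subintervals_bounds:
  fixes \<alpha> lo hi :: real and i :: nat
  assumes E: "E \<in> sets M"
    and bounds: "\<And>y. y \<in> adic_ball m n x \<inter> E \<Longrightarrow>
      lo \<le> density_ratio \<alpha> (n + i) y \<and> density_ratio \<alpha> (n + i) y \<le> hi"
  defines "k \<equiv> card ((\<lambda>y. adic_ball m (n + i) y) ` (adic_ball m n x \<inter> E))"
  shows "k * lo \<le> m powr (\<alpha> * i) * density_ratio \<alpha> n x"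
    and "m powr (\<alpha> * i) * (m powr (\<alpha> * n) * measure M (adic_ball m n x \<inter> E)) \<le> k * hi"
proof -
  define B where "B = adic_ball m n x"
  define R where "R = real m powr (\<alpha> * (n + i))"
  define Ch where "Ch = (\<lambda>y. adic_ball m (n + i) y) ` (B \<inter> E)"
  have k: "k = card Ch" unfolding k_def Ch_def B_def ..
  have R: "R = m powr (\<alpha> * i) * m powr (\<alpha> * n)" "0 \<le> R"
    unfolding R_def by (simp_all add: distrib_left powr_add mult.commute)
  have BE_sub: "B \<inter> E \<subseteq> seqT m" using E sets.sets_into_space space_eq by blast
  have Ch_bounds: "lo \<le> R * measure M C \<and> R * measure M C \<le> hi" if "C \<in> Ch" for C
    using that bounds unfolding Ch_def B_def R_def density_ratio_def by auto
  have sum_eq: "(\<Sum>C\<in>Ch. R * measure M C) = R * measure M (\<Union>Ch)"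
    unfolding Ch_def using BE_sub by (simp add: measure_Union_adic_balls sum_distrib_left)
  have Ch_sets: "\<Union>Ch \<in> sets M"
    unfolding Ch_def using BE_sub adic_ball_in_sets finite_adic_balls
    by (intro sets.finite_Union) (auto intro: finite_subset[OF image_mono])
  have "adic_ball m (n + i) y \<subseteq> B" if "y \<in> B" for y
    using adic_ball_antimono[of n "n + i" m y] adic_ball_eq[of y m n x] that unfolding B_def by simp
  then have "measure M (\<Union>Ch) \<le> measure M B"
    unfolding Ch_def B_def using Ch_sets[unfolded Ch_def B_def] adic_ball_in_sets
    by (intro finite_measure_mono) blast+
  moreover have "measure M (B \<inter> E) \<le> measure M (\<Union>Ch)"
    using BE_sub adic_ball_self Ch_sets unfolding Ch_def by (intro finite_measure_mono) blast+
  ultimately have sum_le: "(\<Sum>C\<in>Ch. R * measure M C) \<le> R * measure M B"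
    and le_sum: "R * measure M (B \<inter> E) \<le> (\<Sum>C\<in>Ch. R * measure M C)"
    unfolding sum_eq using R(2) by (simp_all add: mult_left_mono)
  have "k * lo \<le> (\<Sum>C\<in>Ch. R * measure M C)"
    unfolding k using Ch_bounds by (intro sum_bounded_below) blast
  then show "k * lo \<le> m powr (\<alpha> * i) * density_ratio \<alpha> n x"
    using sum_le unfolding R(1) B_def density_ratio_def by (simp add: mult_ac)
  have "(\<Sum>C\<in>Ch. R * measure M C) \<le> k * hi"
    unfolding k using Ch_bounds by (intro sum_bounded_above) blast
  with le_sum show "m powr (\<alpha> * i) * (m powr (\<alpha> * n) * measure M (adic_ball m n x \<inter> E)) \<le> k * hi"
    unfolding R(1) B_def by (simp add: mult_ac)
qed

lemma exists_subinterval_count: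
  fixes \<alpha> lo hi a b :: real and i :: nat
  assumes E: "E \<in> sets M" "0 < measure M E" and \<eta>: "0 < \<eta>" "\<eta> \<le> 1"
    and uniform: "\<And>y n. y \<in> E \<Longrightarrow> N \<le> n \<Longrightarrow> lo \<le> density_ratio \<alpha> n y \<and> density_ratio \<alpha> n y \<le> hi"
    and frequent: "\<And>x. x \<in> E \<Longrightarrow>
      \<exists>\<^sub>F n in sequentially. a \<le> density_ratio \<alpha> n x \<and> density_ratio \<alpha> n x \<le> b"
  shows "\<exists>k::nat. k * lo \<le> m powr (\<alpha> * i) * b \<and> (1 - \<eta>) * m powr (\<alpha> * i) * a \<le> k * hi"
proof -
  obtain x where x: "x \<in> E" and dense: "\<forall>\<^sub>F n in sequentially.
      measure M (adic_ball m n x - E) \<le> \<eta> * measure M (adic_ball m n x)"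
    using exists_adic_density_point[OF E \<eta>(1)] by blast
  have "\<exists>\<^sub>F n in sequentially. (a \<le> density_ratio \<alpha> n x \<and> density_ratio \<alpha> n x \<le> b) \<and>
      (measure M (adic_ball m n x - E) \<le> \<eta> * measure M (adic_ball m n x) \<and> N \<le> n)"
    using frequently_eventually_frequently[OF frequent[OF x] eventually_conj[OF dense
        eventually_ge_at_top[of N]]] .
  then obtain n where ab: "a \<le> density_ratio \<alpha> n x" "density_ratio \<alpha> n x \<le> b"
    and dense_n: "measure M (adic_ball m n x - E) \<le> \<eta> * measure M (adic_ball m n x)" and "N \<le> n"
    by (auto dest: frequently_ex)
  define r where "r = real m powr (\<alpha> * i)"
  have "0 \<le> r" unfolding r_def by simp
  define k where "k = card ((\<lambda>y. adic_ball m (n + i) y) ` (adic_ball m n x \<inter> E))"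
  have "lo \<le> density_ratio \<alpha> (n + i) y \<and> density_ratio \<alpha> (n + i) y \<le> hi"
    if "y \<in> adic_ball m n x \<inter> E" for y
    using that uniform \<open>N \<le> n\<close> by simp
  note count = card_subintervals_bounds[where n = n and x = x and \<alpha> = \<alpha> and i = i,
      OF E(1) this, folded k_def r_def]
  have upper: "k * lo \<le> r * b"
    using count(1) ab \<open>0 \<le> r\<close> by (meson mult_left_mono order_trans)
  have "(1 - \<eta>) * measure M (adic_ball m n x) \<le> measure M (adic_ball m n x \<inter> E)"
    using dense_n finite_measure_Diff'[OF adic_ball_in_sets E(1)] by (simp add: left_diff_distrib)
  then have "m powr (\<alpha> * n) * ((1 - \<eta>) * measure M (adic_ball m n x))
      \<le> m powr (\<alpha> * n) * measure M (adic_ball m n x \<inter> E)"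
    by (rule mult_left_mono) simp
  then have dense_ratio:
    "(1 - \<eta>) * density_ratio \<alpha> n x \<le> m powr (\<alpha> * n) * measure M (adic_ball m n x \<inter> E)"
    unfolding density_ratio_def by (simp add: mult.left_commute)
  have "(1 - \<eta>) * r * a = r * ((1 - \<eta>) * a)" by (simp add: mult_ac)
  also have "\<dots> \<le> r * ((1 - \<eta>) * density_ratio \<alpha> n x)"
    using ab \<eta> \<open>0 \<le> r\<close> by (intro mult_left_mono) auto
  also have "\<dots> \<le> r * (m powr (\<alpha> * n) * measure M (adic_ball m n x \<inter> E))"
    using dense_ratio \<open>0 \<le> r\<close> by (rule mult_left_mono)
  also have "\<dots> \<le> k * hi"
    by (rule count(2))
  finally show ?thesis using upper unfolding r_def by blast
qed

section \<open>Points of comparable upper and lower density\<close>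

definition regular_point :: "real \<Rightarrow> real \<Rightarrow> (nat \<Rightarrow> nat) \<Rightarrow> bool" where
  "regular_point \<alpha> c x \<longleftrightarrow> upper_density m M \<alpha> x < \<infinity> \<and> 0 < lower_density m M \<alpha> x \<and>
      upper_density m M \<alpha> x \<le> ereal c * lower_density m M \<alpha> x"

text \<open>Only used at regular points: \<open>real_of_ereal\<close> sends infinite densities to \<open>0\<close>.\<close>
definition lower_dens :: "real \<Rightarrow> (nat \<Rightarrow> nat) \<Rightarrow> real" where
  "lower_dens \<alpha> x = real_of_ereal (lower_density m M \<alpha> x)"

definition upper_dens :: "real \<Rightarrow> (nat \<Rightarrow> nat) \<Rightarrow> real" where
  "upper_dens \<alpha> x = real_of_ereal (upper_density m M \<alpha> x)"

lemma measurable_regular_point [measurable]: "Measurable.pred M (regular_point \<alpha> c)"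
proof -
  have "(\<lambda>x. ereal c * lower_density m M \<alpha> x) \<in> borel_measurable M"
    by (intro borel_measurable_ereal_times) auto
  then have [measurable]:
    "Measurable.pred M (\<lambda>x. upper_density m M \<alpha> x \<le> ereal c * lower_density m M \<alpha> x)"
    unfolding pred_def by (intro borel_measurable_le) auto
  show ?thesis unfolding regular_point_def by measurable
qed

lemma measurable_lower_dens [measurable]: "lower_dens \<alpha> \<in> borel_measurable M"
  unfolding lower_dens_def by measurable

lemma measurable_upper_dens [measurable]: "upper_dens \<alpha> \<in> borel_measurable M"
  unfolding upper_dens_def by measurable

lemma regular_pointD:
  assumes "regular_point \<alpha> c x"
  shows "lower_density m M \<alpha> x = ereal (lower_dens \<alpha> x)"
    and "upper_density m M \<alpha> x = ereal (upper_dens \<alpha> x)"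
    and "0 < lower_dens \<alpha> x" "lower_dens \<alpha> x \<le> upper_dens \<alpha> x" "upper_dens \<alpha> x \<le> c * lower_dens \<alpha> x"
proof -
  have le: "lower_density m M \<alpha> x \<le> upper_density m M \<alpha> x"
    by (rule lower_density_le_upper_density)
  with assms show lower: "lower_density m M \<alpha> x = ereal (lower_dens \<alpha> x)"
    unfolding regular_point_def lower_dens_def by (cases "lower_density m M \<alpha> x") auto
  from le assms show upper: "upper_density m M \<alpha> x = ereal (upper_dens \<alpha> x)"
    unfolding regular_point_def upper_dens_def by (cases "upper_density m M \<alpha> x") auto
  show "0 < lower_dens \<alpha> x" "lower_dens \<alpha> x \<le> upper_dens \<alpha> x" "upper_dens \<alpha> x \<le> c * lower_dens \<alpha> x"
    using assms le unfolding regular_point_def lower upper by auto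
qed

lemma eventually_density_ratio_between:
  assumes "regular_point \<alpha> c x" "0 < \<epsilon>"
  shows "\<forall>\<^sub>F n in sequentially. lower_dens \<alpha> x * (1 - \<epsilon>) < density_ratio \<alpha> n x \<and>
    density_ratio \<alpha> n x < upper_dens \<alpha> x * (1 + \<epsilon>)"
proof -
  note x = regular_pointD[OF assms(1)]
  have "\<forall>\<^sub>F n in sequentially. ereal (lower_dens \<alpha> x * (1 - \<epsilon>)) < ereal (density_ratio \<alpha> n x)"
    using x(1,3) assms(2) by (intro less_LiminfD) (simp add: lower_density_eq[symmetric])
  moreover have
    "\<forall>\<^sub>F n in sequentially. ereal (density_ratio \<alpha> n x) < ereal (upper_dens \<alpha> x * (1 + \<epsilon>))"
    using x(2-4) assms(2) by (intro Limsup_lessD) (simp add: upper_density_eq[symmetric])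
  ultimately show ?thesis by eventually_elim simp
qed

lemma frequently_density_ratio_near_lower_dens:
  assumes "regular_point \<alpha> c x" "0 < \<epsilon>"
  shows "\<exists>\<^sub>F n in sequentially. lower_dens \<alpha> x * (1 - \<epsilon>) \<le> density_ratio \<alpha> n x \<and>
    density_ratio \<alpha> n x \<le> lower_dens \<alpha> x * (1 + \<epsilon>)"
proof -
  note x = regular_pointD[OF assms(1)]
  have "\<exists>\<^sub>F n in sequentially. lower_dens \<alpha> x - \<epsilon> * lower_dens \<alpha> x < density_ratio \<alpha> n x \<and>
      density_ratio \<alpha> n x < lower_dens \<alpha> x + \<epsilon> * lower_dens \<alpha> x"
    using x(1,3) assms(2)
    by (intro frequently_near_liminf) (simp_all add: lower_density_eq[symmetric])
  then show ?thesis by (rule frequently_elim1) (simp add: algebra_simps)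
qed

lemma frequently_density_ratio_near_upper_dens:
  assumes "regular_point \<alpha> c x" "0 < \<epsilon>"
  shows "\<exists>\<^sub>F n in sequentially. upper_dens \<alpha> x * (1 - \<epsilon>) \<le> density_ratio \<alpha> n x \<and>
    density_ratio \<alpha> n x \<le> upper_dens \<alpha> x * (1 + \<epsilon>)"
proof -
  note x = regular_pointD[OF assms(1)]
  have "\<exists>\<^sub>F n in sequentially. upper_dens \<alpha> x - \<epsilon> * upper_dens \<alpha> x < density_ratio \<alpha> n x \<and>
      density_ratio \<alpha> n x < upper_dens \<alpha> x + \<epsilon> * upper_dens \<alpha> x"
    using x(2-4) assms(2)
    by (intro frequently_near_limsup) (simp_all add: upper_density_eq[symmetric])
  then show ?thesis by (rule frequently_elim1) (simp add: algebra_simps)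
qed

lemma AE_regular_point_of_C_loc_le:
  assumes "C_loc m M \<alpha> \<le> ereal c"
    and "AE x in M. upper_density m M \<alpha> x < \<infinity> \<and> 0 < lower_density m M \<alpha> x"
  shows "AE x in M. regular_point \<alpha> c x"
proof -
  have "AE x in M. upper_density m M \<alpha> x / lower_density m M \<alpha> x \<le> C_loc m M \<alpha>"
    unfolding C_loc_def by (rule esssup_AE)
  with assms(2) show ?thesis
  proof eventually_elim
    case (elim x)
    have "lower_density m M \<alpha> x \<noteq> \<infinity>"
      using elim lower_density_le_upper_density[of \<alpha> x] by auto
    then have "upper_density m M \<alpha> x \<le> C_loc m M \<alpha> * lower_density m M \<alpha> x"
      using elim by (simp add: ereal_divide_le_pos mult.commute)
    also have "\<dots> \<le> ereal c * lower_density m M \<alpha> x"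
      using elim assms(1) by (intro ereal_mult_right_mono) auto
    finally show ?case using elim unfolding regular_point_def by simp
  qed
qed

end

locale regular_adic_measure = adic_measure M m for M m +
  fixes \<alpha> c :: real
  assumes AE_regular_point: "AE x in M. regular_point \<alpha> c x"
    and space_not_null: "emeasure M (space M) \<noteq> 0"
begin

lemma one_le_c: "1 \<le> c"
proof -
  obtain x where "regular_point \<alpha> c x"
    using eventually_happens[OF AE_regular_point] space_not_null
    by (auto simp: ae_filter_eq_bot_iff)
  from regular_pointD(3-5)[OF this] show ?thesis
    by (metis mult_le_cancel_right1 order_trans)
qed

lemma m_pos: "0 < m"
proof (rule ccontr)
  assume "\<not> 0 < m"
  then have "space M = {}" by (simp add: space_eq seqT_def)
  then show False using space_not_null by simp
qed

lemma exists_rational_window: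
  fixes \<phi> a b \<epsilon> :: real
  assumes x: "regular_point \<alpha> c x" and "0 < a" "0 < \<phi>"
    and \<phi>: "a * \<phi> \<le> lower_dens \<alpha> x" "upper_dens \<alpha> x \<le> b * \<phi>"
    and \<epsilon>: "0 < \<epsilon>" "\<epsilon> < 1"
  shows "\<exists>N (q::rat). 0 < q \<and> of_rat q \<le> \<phi> \<and> \<phi> < of_rat q * (1 + \<epsilon>) \<and>
    (\<forall>n\<ge>N. a * of_rat q * (1 - \<epsilon>) \<le> density_ratio \<alpha> n x \<and>
      density_ratio \<alpha> n x \<le> b * of_rat q * (1 + \<epsilon>)^2)"
proof -
  have "\<phi> / (1 + \<epsilon>) < \<phi>" using \<open>0 < \<phi>\<close> \<epsilon> by (simp add: divide_less_eq)
  then obtain q where q: "\<phi> / (1 + \<epsilon>) < of_rat q" "of_rat q < \<phi>"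
    using of_rat_dense by blast
  have "0 < \<phi> / (1 + \<epsilon>)" using \<open>0 < \<phi>\<close> \<epsilon> by simp
  then have "0 < real_of_rat q" using q(1) by linarith
  then have q_pos: "0 < q" by simp
  have \<phi>_less: "\<phi> < of_rat q * (1 + \<epsilon>)" using q(1) \<epsilon> by (simp add: divide_less_eq)
  have "0 < b * \<phi>" using \<phi>(2) regular_pointD(3,4)[OF x] by linarith
  then have "0 \<le> b" using \<open>0 < \<phi>\<close> by (simp add: zero_less_mult_iff)
  obtain N where N: "\<And>n. N \<le> n \<Longrightarrow> lower_dens \<alpha> x * (1 - \<epsilon>) < density_ratio \<alpha> n x \<and>
      density_ratio \<alpha> n x < upper_dens \<alpha> x * (1 + \<epsilon>)"
    using eventually_density_ratio_between[OF x \<epsilon>(1)] unfolding eventually_sequentially by blast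
  have "a * of_rat q \<le> a * \<phi>" using q(2) \<open>0 < a\<close> by simp
  then have "a * of_rat q * (1 - \<epsilon>) \<le> lower_dens \<alpha> x * (1 - \<epsilon>)"
    using \<phi>(1) \<epsilon> by (intro mult_right_mono) auto
  moreover have "upper_dens \<alpha> x * (1 + \<epsilon>) \<le> b * of_rat q * (1 + \<epsilon>)^2"
  proof -
    have "upper_dens \<alpha> x \<le> b * (of_rat q * (1 + \<epsilon>))"
      using \<phi>(2) \<phi>_less \<open>0 \<le> b\<close> by (meson less_imp_le mult_left_mono order_trans)
    then show ?thesis using \<epsilon> by (simp add: power2_eq_square mult_right_mono mult.assoc)
  qed
  ultimately have "\<forall>n\<ge>N. a * of_rat q * (1 - \<epsilon>) \<le> density_ratio \<alpha> n x \<and>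
      density_ratio \<alpha> n x \<le> b * of_rat q * (1 + \<epsilon>)^2"
    using N by (meson less_imp_le order_trans)
  then show ?thesis using q_pos q(2) \<phi>_less by (intro exI[of _ N] exI[of _ q]) simp
qed

lemma exists_window_set:
  fixes \<phi> :: "(nat \<Rightarrow> nat) \<Rightarrow> real" and a b \<epsilon> :: real
  assumes "0 < a" and [measurable]: "\<phi> \<in> borel_measurable M"
    and \<phi>: "\<And>x. regular_point \<alpha> c x \<Longrightarrow>
      0 < \<phi> x \<and> a * \<phi> x \<le> lower_dens \<alpha> x \<and> upper_dens \<alpha> x \<le> b * \<phi> x"
    and \<epsilon>: "0 < \<epsilon>" "\<epsilon> < 1"
  obtains N q where "0 < q"
    and "0 < measure M {x \<in> space M. regular_point \<alpha> c x \<and> q \<le> \<phi> x \<and> \<phi> x < q * (1 + \<epsilon>) \<and>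
      (\<forall>n\<ge>N. a * q * (1 - \<epsilon>) \<le> density_ratio \<alpha> n x \<and> density_ratio \<alpha> n x \<le> b * q * (1 + \<epsilon>)^2)}"
proof -
  define E where "E = (\<lambda>(N, q::rat). {x \<in> space M. regular_point \<alpha> c x \<and>
      of_rat q \<le> \<phi> x \<and> \<phi> x < of_rat q * (1 + \<epsilon>) \<and>
      (\<forall>n\<ge>N. a * of_rat q * (1 - \<epsilon>) \<le> density_ratio \<alpha> n x \<and>
        density_ratio \<alpha> n x \<le> b * of_rat q * (1 + \<epsilon>)^2)})"
  have E_sets: "E Nq \<in> sets M" for Nq
    unfolding E_def by (cases Nq) (simp only: prod.case, measurable)
  have "\<exists>Nq \<in> UNIV \<times> {q. 0 < q}. 0 < emeasure M (E Nq)"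
  proof (rule exists_pos_emeasure_of_AE_cover)
    show "countable ((UNIV :: nat set) \<times> {q::rat. 0 < q})" by (rule countableI_type)
    show "AE x in M. \<exists>Nq \<in> UNIV \<times> {q. 0 < q}. x \<in> E Nq"
      using AE_regular_point AE_space
    proof eventually_elim
      case (elim x)
      then show ?case
        using exists_rational_window[OF elim(1) \<open>0 < a\<close> _ _ _ \<epsilon>] \<phi>[OF elim(1)]
        unfolding E_def by fastforce
    qed
  qed (use E_sets space_not_null in auto)
  then obtain N q where "0 < q" "0 < emeasure M (E (N, q))" by blast
  then show ?thesis
    using that[of "of_rat q" N] by (simp add: E_def emeasure_eq_measure)
qed

lemma exists_subinterval_count_approx:
  fixes \<phi> :: "(nat \<Rightarrow> nat) \<Rightarrow> real" and a b \<epsilon> :: real and i :: nat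
  assumes "0 < a" and \<phi>_meas: "\<phi> \<in> borel_measurable M"
    and \<phi>: "\<And>x. regular_point \<alpha> c x \<Longrightarrow>
      0 < \<phi> x \<and> a * \<phi> x \<le> lower_dens \<alpha> x \<and> upper_dens \<alpha> x \<le> b * \<phi> x"
    and \<phi>_cluster: "\<And>x \<delta>. regular_point \<alpha> c x \<Longrightarrow> 0 < \<delta> \<Longrightarrow> \<exists>\<^sub>F n in sequentially.
      \<phi> x * (1 - \<delta>) \<le> density_ratio \<alpha> n x \<and> density_ratio \<alpha> n x \<le> \<phi> x * (1 + \<delta>)"
    and \<epsilon>: "0 < \<epsilon>" "\<epsilon> < 1"
  shows "\<exists>k::nat. a * k * (1 - \<epsilon>) \<le> m powr (\<alpha> * i) * (1 + \<epsilon>)^2 \<and>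
    m powr (\<alpha> * i) * (1 - \<epsilon>)^2 \<le> b * k * (1 + \<epsilon>)^2"
proof -
  define E where "E N q = {x \<in> space M. regular_point \<alpha> c x \<and> q \<le> \<phi> x \<and> \<phi> x < q * (1 + \<epsilon>) \<and>
      (\<forall>n\<ge>N. a * q * (1 - \<epsilon>) \<le> density_ratio \<alpha> n x \<and> density_ratio \<alpha> n x \<le> b * q * (1 + \<epsilon>)^2)}"
    for N q
  obtain N q where "0 < q" and E_pos: "0 < measure M (E N q)"
    using exists_window_set[OF \<open>0 < a\<close> \<phi>_meas \<phi> \<epsilon>] unfolding E_def by blast
  have E_sets: "E N q \<in> sets M" unfolding E_def using \<phi>_meas by measurable
  have uniform: "a * q * (1 - \<epsilon>) \<le> density_ratio \<alpha> n y \<and> density_ratio \<alpha> n y \<le> b * q * (1 + \<epsilon>)^2"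
    if "y \<in> E N q" "N \<le> n" for y n
    using that unfolding E_def by blast
  have frequent: "\<exists>\<^sub>F n in sequentially.
      q * (1 - \<epsilon>) \<le> density_ratio \<alpha> n x \<and> density_ratio \<alpha> n x \<le> q * (1 + \<epsilon>)^2"
    if "x \<in> E N q" for x
  proof -
    have x: "regular_point \<alpha> c x" "q \<le> \<phi> x" "\<phi> x < q * (1 + \<epsilon>)" using that unfolding E_def by auto
    have "q * (1 - \<epsilon>) \<le> \<phi> x * (1 - \<epsilon>)" using x \<epsilon> by (intro mult_right_mono) auto
    moreover have "\<phi> x * (1 + \<epsilon>) \<le> q * (1 + \<epsilon>)^2"
      using x \<epsilon> by (simp add: power2_eq_square mult.assoc[symmetric] mult_right_mono)
    ultimately show ?thesis
      using \<phi>_cluster[OF x(1) \<epsilon>(1)] by (elim frequently_elim1) (meson order_trans)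
  qed
  from exists_subinterval_count[where i = i,
      OF E_sets E_pos \<epsilon>(1) less_imp_le[OF \<epsilon>(2)] uniform frequent]
  obtain k :: nat where
    "k * (a * q * (1 - \<epsilon>)) \<le> m powr (\<alpha> * i) * (q * (1 + \<epsilon>)^2)"
    "(1 - \<epsilon>) * m powr (\<alpha> * i) * (q * (1 - \<epsilon>)) \<le> k * (b * q * (1 + \<epsilon>)^2)"
    by blast
  then have "q * (a * k * (1 - \<epsilon>)) \<le> q * (m powr (\<alpha> * i) * (1 + \<epsilon>)^2)"
    "q * (m powr (\<alpha> * i) * (1 - \<epsilon>)^2) \<le> q * (b * k * (1 + \<epsilon>)^2)"
    by (simp_all add: algebra_simps power2_eq_square)
  then show ?thesis using \<open>0 < q\<close> by (auto simp: mult_le_cancel_left_pos)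
qed

lemma exists_nat_scaled_between:
  fixes \<phi> :: "(nat \<Rightarrow> nat) \<Rightarrow> real" and a b :: real and i :: nat
  assumes "0 < a" and "\<phi> \<in> borel_measurable M"
    and "\<And>x. regular_point \<alpha> c x \<Longrightarrow>
      0 < \<phi> x \<and> a * \<phi> x \<le> lower_dens \<alpha> x \<and> upper_dens \<alpha> x \<le> b * \<phi> x"
    and "\<And>x \<delta>. regular_point \<alpha> c x \<Longrightarrow> 0 < \<delta> \<Longrightarrow> \<exists>\<^sub>F n in sequentially.
      \<phi> x * (1 - \<delta>) \<le> density_ratio \<alpha> n x \<and> density_ratio \<alpha> n x \<le> \<phi> x * (1 + \<delta>)"
  shows "\<exists>k::nat. a * k \<le> m powr (\<alpha> * i) \<and> m powr (\<alpha> * i) \<le> b * k"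
  using assms m_pos by (intro exists_nat_between_of_approx exists_subinterval_count_approx) auto

lemma exists_nat_between_lower_dens:
  fixes i :: nat
  shows "\<exists>k::nat. k \<le> m powr (\<alpha> * i) \<and> m powr (\<alpha> * i) \<le> c * k"
proof -
  have "0 < lower_dens \<alpha> x \<and> 1 * lower_dens \<alpha> x \<le> lower_dens \<alpha> x \<and>
      upper_dens \<alpha> x \<le> c * lower_dens \<alpha> x"
    if "regular_point \<alpha> c x" for x
    using regular_pointD[OF that] by simp
  from exists_nat_scaled_between[OF _ measurable_lower_dens this
      frequently_density_ratio_near_lower_dens[where c = c]]
  show ?thesis by simp
qed

lemma exists_nat_between_upper_dens:
  fixes i :: nat
  shows "\<exists>k::nat. m powr (\<alpha> * i) \<le> k \<and> k \<le> c * m powr (\<alpha> * i)"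
proof -
  have "0 < c" using one_le_c by simp
  have "0 < upper_dens \<alpha> x \<and> 1 / c * upper_dens \<alpha> x \<le> lower_dens \<alpha> x \<and>
      upper_dens \<alpha> x \<le> 1 * upper_dens \<alpha> x"
    if "regular_point \<alpha> c x" for x
    using regular_pointD(3-5)[OF that] \<open>0 < c\<close> by (auto simp: field_simps)
  from exists_nat_scaled_between[OF _ measurable_upper_dens this
      frequently_density_ratio_near_upper_dens[where c = c]]
  show ?thesis using \<open>0 < c\<close> by (auto simp: field_simps)
qed

lemma powr_divide_floor_le:
  fixes i :: nat
  assumes "0 \<le> \<alpha>"
  shows "m powr (\<alpha> * i) / \<lfloor>m powr (\<alpha> * i)\<rfloor> \<le> c"
proof -
  have "1 \<le> real m powr (\<alpha> * i)" using m_pos assms by (simp add: ge_one_powr_ge_zero)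
  with exists_nat_between_lower_dens[of i] show ?thesis by (auto intro: divide_floor_le)
qed

lemma ceiling_divide_powr_le:
  fixes i :: nat
  shows "\<lceil>m powr (\<alpha> * i)\<rceil> / m powr (\<alpha> * i) \<le> c"
proof -
  have "0 < real m powr (\<alpha> * i)" using m_pos by simp
  with exists_nat_between_upper_dens[of i] show ?thesis by (auto intro: ceiling_divide_le)
qed

end

lemma regular_adic_measure_of_C_loc_le:
  assumes "space \<mu> = seqT m" "sets \<mu> = borelT m"
    and "emeasure \<mu> (space \<mu>) < \<infinity>" "emeasure \<mu> (space \<mu>) \<noteq> 0"
    and "AE x in \<mu>. upper_density m \<mu> \<alpha> x < \<infinity> \<and> 0 < lower_density m \<mu> \<alpha> x"
    and "C_loc m \<mu> \<alpha> \<le> ereal c"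
  shows "regular_adic_measure \<mu> m \<alpha> c"
proof -
  have "finite_measure \<mu>" using assms(3) by (intro finite_measureI) simp
  then have adic: "adic_measure \<mu> m"
    using assms(1,2) by (intro adic_measure.intro adic_measure_axioms.intro)
  then show ?thesis
    using adic_measure.AE_regular_point_of_C_loc_le[OF adic assms(6,5)] assms(4)
    by (intro regular_adic_measure.intro regular_adic_measure_axioms.intro)
qed

theorem theorem1:
  fixes m :: nat and \<alpha> :: real and \<mu> :: "(nat \<Rightarrow> nat) measure"
  assumes "m \<ge> 2"
    and "0 < \<alpha>" and "\<alpha> < 1"
    and "space \<mu> = seqT m" and "sets \<mu> = borelT m"
    and "emeasure \<mu> (space \<mu>) < \<infinity>" and "emeasure \<mu> (space \<mu>) \<noteq> 0"
    and "AE x in \<mu>. upper_density m \<mu> \<alpha> x < \<infinity> \<and> lower_density m \<mu> \<alpha> x > 0"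
  shows "C_loc m \<mu> \<alpha> \<ge>
    (SUP ij \<in> {1..} \<times> {1..}.
       ereal (max (real m powr (\<alpha> * real (fst ij)) / real_of_int \<lfloor>real m powr (\<alpha> * real (fst ij))\<rfloor>)
                  (real_of_int \<lceil>real m powr (\<alpha> * real (snd ij))\<rceil> / real m powr (\<alpha> * real (snd ij)))))"
  apply (rule ereal_le_real, rule SUP_least)
  subgoal premises prems for c ij
  proof -
    interpret regular_adic_measure \<mu> m \<alpha> c
      by (rule regular_adic_measure_of_C_loc_le[OF assms(4-8) prems(1)])
    have "0 \<le> \<alpha>" using assms(2) by simp
    then show ?thesis
      using powr_divide_floor_le[of "fst ij"] ceiling_divide_powr_le[of "snd ij"] by simp
  qed
  done

end
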